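(* Under the hypotheses of the setting below, the functions $\Phi=\varphi\Delta^{-1}=W\{\varphi\}C^{-1}$ and $\Psi=\psi(\Delta^{-1})^\top=(W^{-1})^\tau\{\psi\}(C^\top)^{-1}$ satisfy $$\hat L_{k,l}\{\Phi\}+c_l(\hat M_n)^{l+1}\{\Phi\}=0,\qquad \hat L_{k,l}^\tau\{\Psi\}+c_l(\hat M_n^\tau)^{l+1}\{\Psi\}=0,$$ where $\hat L_{k,l}=WL_{k,l}W^{-1}$ and $\hat M_n=WM_nW^{-1}$.
   Context: $D=\partial/\partial x$. Operators are formal matrix pseudodifferential operators in $D$ whose coefficients are $N\times N$ matrix functions of $x$ and $t_n$; they may also contain $\partial_{t_n}$, which commutes with $D$. $P\{f\}$ is the action on $f$, with $D^{-1}$ a fixed $x$-antiderivative commuting with $\partial_{t_n}$. The formal transpose $P^\tau$ is the anti-automorphism with $(fD^i)^\tau=(-1)^iD^if^\top$, $\partial_{t_n}^\tau=-\partial_{t_n}$, $(PQ)^\tau=Q^\tau P^\tau$. Setting. Data: $k,n\in\mathbb N$; $l\ge0$; $c_l,\alpha_n\in\mathbb C$; $\mathcal J_k,\tilde{\mathcal J}_n$ commuting constant $N\times N$ matrices; $u_j,v_i$ are $N\times N$ matrix functions; $\mathbf q,\mathbf r$ are $N\times m$ matrix functions; $\mathcal M_0$ is a constant $m\times m$ matrix. Operators: $$M_n=\alpha_n\partial_{t_n}-\tilde{\mathcal J}_nD^n-\sum_{i=0}^{n-1}v_iD^i-\mathbf q\mathcal M_0D^{-1}\mathbf r^\top,$$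 $$L_{k,l}=\mathcal J_kD^k+\sum_{j=0}^{k-1}u_jD^j+c_l\sum_{j=0}^l\mathbf q[j]\mathcal M_0D^{-1}\mathbf r^\top[l-j],$$ with $\mathbf q[j]=M_n^j\{\mathbf q\}$ and $\mathbf r^\top[j]=((M_n^\tau)^j\{\mathbf r\})^\top$. Hypotheses: $N\times K$ matrix functions $\varphi,\psi$ satisfy $M_n\{\varphi\}=\varphi\Lambda$, $M_n^\tau\{\psi\}=\psi\tilde\Lambda$, $L_{k,l}\{\varphi\}=-c_l\varphi\Lambda^{l+1}$ and $L^\tau_{k,l}\{\psi\}=-c_l\psi\tilde\Lambda^{l+1}$, where $\Lambda,\tilde\Lambda$ are constant $K\times K$ matrices. $C$ is a constant invertible $K\times K$ matrix, $\Delta=C+D^{-1}\{\psi^\top\varphi\}$, $W=I-\varphi\Delta^{-1}D^{-1}\psi^\top$, and $W^{-1}=I+\varphi D^{-1}\Delta^{-1}\psi^\top$. *)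

theory Defs
  imports "Jordan_Normal_Form.Matrix"
begin

text \<open>The matrix functions of x and t_n are modelled by
matrices over a commutative ring of scalar functions 'a, equipped with commuting
derivations Dx (= d/dx) and Dt (= d/dt_n), a fixed antiderivative J (= D^{-1}) commuting
with Dt, and an embedding emb of complex constants.  The antiderivative is normalised like
an integral from a base point x0: the boundary term E f = f - J (Dx f) (evaluation at x0)
is additive and multiplicative.\<close>

definition diff_setting ::
  "('a::comm_ring_1 \<Rightarrow> 'a) \<Rightarrow> ('a \<Rightarrow> 'a) \<Rightarrow> ('a \<Rightarrow> 'a) \<Rightarrow> (complex \<Rightarrow> 'a) \<Rightarrow> bool" where
  "diff_setting Dx Dt J emb \<longleftrightarrow>
     (\<forall>f g. Dx (f + g) = Dx f + Dx g \<and> Dx (f * g) = Dx f * g + f * Dx g) \<and>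
     (\<forall>f g. Dt (f + g) = Dt f + Dt g \<and> Dt (f * g) = Dt f * g + f * Dt g) \<and>
     (\<forall>f. Dx (Dt f) = Dt (Dx f)) \<and>
     (\<forall>f. Dx (J f) = f) \<and>
     (\<forall>f g. J (f + g) = J f + J g) \<and>
     (\<forall>f. J (Dt f) = Dt (J f)) \<and>
     (\<forall>f g. (f - J (Dx f)) * (g - J (Dx g)) = f * g - J (Dx (f * g))) \<and>
     (\<forall>a b. emb (a + b) = emb a + emb b \<and> emb (a * b) = emb a * emb b) \<and> emb 1 = 1 \<and>
     (\<forall>a. Dx (emb a) = 0 \<and> Dt (emb a) = 0)"

text \<open>Operator expressions (formal matrix pseudodifferential operators in D, possibly
containing the t-derivative).  Coefficients are matrices of arbitrary compatible shape.\<close>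

datatype 'a opr =
    Id
  | Zero
  | Mul "'a mat"
  | Dop
  | Iop
  | Top
  | Scal 'a "'a opr"
  | Add "'a opr" "'a opr"
  | Comp "'a opr" "'a opr"

fun act :: "('a::comm_ring_1 \<Rightarrow> 'a) \<Rightarrow> ('a \<Rightarrow> 'a) \<Rightarrow> ('a \<Rightarrow> 'a) \<Rightarrow> 'a opr \<Rightarrow> 'a mat \<Rightarrow> 'a mat" where
  "act Dx Dt J Id f = f"
| "act Dx Dt J Zero f = 0\<^sub>m (dim_row f) (dim_col f)"
| "act Dx Dt J (Mul A) f = A * f"
| "act Dx Dt J Dop f = map_mat Dx f"
| "act Dx Dt J Iop f = map_mat J f"
| "act Dx Dt J Top f = map_mat Dt f"
| "act Dx Dt J (Scal c P) f = c \<cdot>\<^sub>m act Dx Dt J P f"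
| "act Dx Dt J (Add P Q) f = act Dx Dt J P f + act Dx Dt J Q f"
| "act Dx Dt J (Comp P Q) f = act Dx Dt J P (act Dx Dt J Q f)"

fun tau :: "'a::comm_ring_1 opr \<Rightarrow> 'a opr" where
  "tau Id = Id"
| "tau Zero = Zero"
| "tau (Mul A) = Mul (transpose_mat A)"
| "tau Dop = Scal (-1) Dop"
| "tau Iop = Scal (-1) Iop"
| "tau Top = Scal (-1) Top"
| "tau (Scal c P) = Scal c (tau P)"
| "tau (Add P Q) = Add (tau P) (tau Q)"
| "tau (Comp P Q) = Comp (tau Q) (tau P)"

fun opow :: "'a opr \<Rightarrow> nat \<Rightarrow> 'a opr" where
  "opow P 0 = Id"
| "opow P (Suc i) = Comp P (opow P i)"

fun osum :: "(nat \<Rightarrow> 'a opr) \<Rightarrow> nat \<Rightarrow> 'a opr" where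
  "osum F 0 = Zero"
| "osum F (Suc i) = Add (osum F i) (F i)"

definition cmat :: "(complex \<Rightarrow> 'a) \<Rightarrow> complex mat \<Rightarrow> 'a mat" where
  "cmat emb A = map_mat emb A"

definition M_op :: "(complex \<Rightarrow> 'a::comm_ring_1) \<Rightarrow> nat \<Rightarrow> complex \<Rightarrow> complex mat
    \<Rightarrow> (nat \<Rightarrow> 'a mat) \<Rightarrow> 'a mat \<Rightarrow> complex mat \<Rightarrow> 'a mat \<Rightarrow> 'a opr" where
  "M_op emb n \<alpha> Jt v q M0 r =
     Add (Scal (emb \<alpha>) Top)
       (Scal (-1) (Add (Add (Comp (Mul (cmat emb Jt)) (opow Dop n))
                            (osum (\<lambda>i. Comp (Mul (v i)) (opow Dop i)) n))
                       (Comp (Mul (q * cmat emb M0)) (Comp Iop (Mul (transpose_mat r))))))"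

definition L_op :: "('a::comm_ring_1 \<Rightarrow> 'a) \<Rightarrow> ('a \<Rightarrow> 'a) \<Rightarrow> ('a \<Rightarrow> 'a) \<Rightarrow> (complex \<Rightarrow> 'a)
    \<Rightarrow> 'a opr \<Rightarrow> nat \<Rightarrow> nat \<Rightarrow> complex \<Rightarrow> complex mat \<Rightarrow> (nat \<Rightarrow> 'a mat)
    \<Rightarrow> 'a mat \<Rightarrow> complex mat \<Rightarrow> 'a mat \<Rightarrow> 'a opr" where
  "L_op Dx Dt J emb M k l c Jk u q M0 r =
     Add (Add (Comp (Mul (cmat emb Jk)) (opow Dop k))
              (osum (\<lambda>j. Comp (Mul (u j)) (opow Dop j)) k))
         (Scal (emb c)
            (osum (\<lambda>j. Comp (Mul (act Dx Dt J (opow M j) q * cmat emb M0))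
                         (Comp Iop (Mul (transpose_mat (act Dx Dt J (opow (tau M) (l - j)) r)))))
                  (Suc l)))"

definition W_op :: "'a::comm_ring_1 mat \<Rightarrow> 'a mat \<Rightarrow> 'a mat \<Rightarrow> 'a opr" where
  "W_op \<phi> \<psi> \<Delta>i = Add Id (Scal (-1) (Comp (Mul (\<phi> * \<Delta>i)) (Comp Iop (Mul (transpose_mat \<psi>)))))"

definition Winv_op :: "'a::comm_ring_1 mat \<Rightarrow> 'a mat \<Rightarrow> 'a mat \<Rightarrow> 'a opr" where
  "Winv_op \<phi> \<psi> \<Delta>i = Add Id (Comp (Mul \<phi>) (Comp Iop (Mul (\<Delta>i * transpose_mat \<psi>))))"

definition dress :: "'a::comm_ring_1 mat \<Rightarrow> 'a mat \<Rightarrow> 'a mat \<Rightarrow> 'a opr \<Rightarrow> 'a opr" where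
  "dress \<phi> \<psi> \<Delta>i P = Comp (W_op \<phi> \<psi> \<Delta>i) (Comp P (Winv_op \<phi> \<psi> \<Delta>i))"

end

theory Submission
  imports Defs
begin

text \<open>Since \<open>D \<Delta> = \<psi>^T \<phi>\<close> and \<open>\<Delta>\<close> has boundary value \<open>C\<close>, integrating the derivative of
the inverse, \<open>D(\<Delta>^-1) = -\<Delta>^-1 \<psi>^T \<phi> \<Delta>^-1\<close>, gives \<open>D^-1{\<Delta>^-1 \<psi>^T \<phi> \<Delta>^-1} = C^-1 - \<Delta>^-1\<close>.
Hence \<open>W{\<phi>} = \<Phi> C\<close> and \<open>W^-1{\<Phi>} = \<phi> C^-1\<close>, and dually \<open>(W^-1)^\<tau>{\<psi>} = \<Psi> C^T\<close> and
\<open>W^\<tau>{\<Psi>} = \<psi> (C^T)^-1\<close>.  Operators commute with right multiplication by constant matrices,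
so an eigenrelation \<open>P{\<phi>} = \<phi> Y\<close> turns into \<open>(W P W^-1){\<Phi>} = \<Phi> C Y C^-1\<close>.  For \<open>M_n\<close> and
\<open>L_{k,l}\<close> the eigenvalues become \<open>C \<Lambda> C^-1\<close> and \<open>-c C \<Lambda>^(l+1) C^-1 = -c (C \<Lambda> C^-1)^(l+1)\<close>,
so the two terms of the dressed equation cancel.\<close>

lemma pow_mat_Suc_left: "A \<in> carrier_mat n n \<Longrightarrow> A ^\<^sub>m Suc j = A * A ^\<^sub>m j"
proof (induction j)
  case (Suc j)
  then have "A ^\<^sub>m Suc (Suc j) = A * A ^\<^sub>m j * A" by simp
  with Suc.prems show ?case by (simp add: assoc_mult_mat[of A n n _ n A n])
qed simp

lemma assoc_mult_mat_dim:
  "dim_col A = dim_row B \<Longrightarrow> dim_col B = dim_row C \<Longrightarrow> A * B * C = A * (B * (C :: 'a::semiring_0 mat))"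
  by (rule assoc_mult_mat[of A "dim_row A" "dim_col A" B _ C "dim_col C"]) auto

lemma transpose_mult_dim:
  "dim_col A = dim_row B \<Longrightarrow> transpose_mat (A * B) = transpose_mat B * transpose_mat (A :: 'a::comm_semiring_0 mat)"
  by (rule transpose_mult[of A "dim_row A" "dim_col A" B "dim_col B"]) auto

lemma add_eq_zero_imp_eq_uminus_mat:
  fixes A B :: "'a::ab_group_add mat"
  assumes AB: "A + B = 0\<^sub>m n m" and A: "A \<in> carrier_mat n m" and B: "B \<in> carrier_mat n m"
  shows "B = - A"
proof -
  have "B = (- A + A) + B" using A B by simp
  also have "\<dots> = - A + (A + B)" using A B by (intro assoc_add_mat) auto
  also have "\<dots> = - A" using A by (simp add: AB)
  finally show ?thesis .
qed

lemma right_inverse_eq_left_inverse_mat: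
  fixes A B B' :: "'a::semiring_1 mat"
  assumes A: "A \<in> carrier_mat n n" and B: "B \<in> carrier_mat n n" and B': "B' \<in> carrier_mat n n"
    and "A * B = 1\<^sub>m n" and "B' * A = 1\<^sub>m n"
  shows "B = B'"
proof -
  have "B = (B' * A) * B" using assms by simp
  also have "\<dots> = B' * (A * B)" by (rule assoc_mult_mat[OF B' A B])
  also have "\<dots> = B'" using assms by simp
  finally show ?thesis .
qed

lemma mult_neg_smult_mult_mat:
  fixes A B D :: "'a::comm_ring_1 mat"
  assumes "A \<in> carrier_mat n k" "B \<in> carrier_mat k k'" "D \<in> carrier_mat k' m"
  shows "A * - (c \<cdot>\<^sub>m B) * D = - (c \<cdot>\<^sub>m (A * B * D))"
  using assms by (simp add: mult_smult_distrib[of A n k] mult_smult_assoc_mat[of _ n k'])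

lemma add_smult_neg_one_cancel_mat:
  fixes B D :: "'a::ring_1 mat"
  shows "B \<in> carrier_mat n m \<Longrightarrow> D \<in> carrier_mat n m \<Longrightarrow> (B + D) + (-1) \<cdot>\<^sub>m D = B"
  by (intro eq_matI) auto

lemma smult_neg_one_neg_one_mat: "(-1) \<cdot>\<^sub>m ((-1) \<cdot>\<^sub>m A) = (A :: 'a::ring_1 mat)"
  by (intro eq_matI) auto

lemma add_diff_cancel_left_mat:
  fixes A B :: "'a::ab_group_add mat"
  shows "A \<in> carrier_mat n m \<Longrightarrow> B \<in> carrier_mat n m \<Longrightarrow> A + (B - A) = B"
  by (intro eq_matI) auto

lemma additive_ab_group_add_hom:
  fixes h :: "'a::ab_group_add \<Rightarrow> 'b::ab_group_add"
  assumes add: "\<And>x y. h (x + y) = h x + h y"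
  shows "ab_group_add_hom h"
proof
  have "h 0 + h 0 = h 0" using add[of 0 0] by simp
  then show "h 0 = 0" by simp
qed (rule add)

lemma cmat_carrier_mat [simp]: "cmat emb A \<in> carrier_mat n m \<longleftrightarrow> A \<in> carrier_mat n m"
  by (simp add: cmat_def)

lemma dim_row_cmat [simp]: "dim_row (cmat emb A) = dim_row A"
  and dim_col_cmat [simp]: "dim_col (cmat emb A) = dim_col A"
  by (simp_all add: cmat_def)

lemma transpose_cmat: "transpose_mat (cmat emb A) = cmat emb (transpose_mat A)"
  by (simp add: cmat_def map_mat_transpose)

text \<open>\<open>Mul\<close> multiplies without checking dimensions, so operators are only well behaved
when their coefficients have compatible shapes; \<open>wf_opr P r s\<close> says that \<open>P\<close> maps matrices
with \<open>r\<close> rows to matrices with \<open>s\<close> rows.\<close>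

inductive wf_opr :: "'a::comm_ring_1 opr \<Rightarrow> nat \<Rightarrow> nat \<Rightarrow> bool" where
  wf_opr_Id: "wf_opr Id r r"
| wf_opr_Zero: "wf_opr Zero r r"
| wf_opr_Mul: "A \<in> carrier_mat s r \<Longrightarrow> wf_opr (Mul A) r s"
| wf_opr_Dop: "wf_opr Dop r r"
| wf_opr_Iop: "wf_opr Iop r r"
| wf_opr_Top: "wf_opr Top r r"
| wf_opr_Scal: "wf_opr P r s \<Longrightarrow> wf_opr (Scal a P) r s"
| wf_opr_Add: "wf_opr P r s \<Longrightarrow> wf_opr Q r s \<Longrightarrow> wf_opr (Add P Q) r s"
| wf_opr_Comp: "wf_opr Q r s \<Longrightarrow> wf_opr P s t \<Longrightarrow> wf_opr (Comp P Q) r t"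

lemma wf_opr_tau: "wf_opr P r s \<Longrightarrow> wf_opr (tau P) s r"
  by (induction rule: wf_opr.induct) (auto intro: wf_opr.intros)

lemma wf_opr_opow: "wf_opr P r r \<Longrightarrow> wf_opr (opow P j) r r"
  by (induction j) (auto intro: wf_opr.intros)

lemma wf_opr_osum: "(\<And>i. i < n \<Longrightarrow> wf_opr (F i) r r) \<Longrightarrow> wf_opr (osum F n) r r"
  by (induction n) (auto intro: wf_opr.intros)

lemma act_carrier_mat:
  "wf_opr P r s \<Longrightarrow> f \<in> carrier_mat r c \<Longrightarrow> act Dx Dt J P f \<in> carrier_mat s c"
  by (induction P r s arbitrary: f rule: wf_opr.induct) auto

lemma wf_opr_Mul_Iop_Mul:
  "A \<in> carrier_mat t s \<Longrightarrow> B \<in> carrier_mat s r \<Longrightarrow> wf_opr (Comp (Mul A) (Comp Iop (Mul B))) r t"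
  by (rule wf_opr_Comp[OF wf_opr_Comp[OF wf_opr_Mul wf_opr_Iop] wf_opr_Mul])

lemma wf_opr_Mul_Dop_pow: "A \<in> carrier_mat r r \<Longrightarrow> wf_opr (Comp (Mul A) (opow Dop i)) r r"
  by (rule wf_opr_Comp[OF wf_opr_opow[OF wf_opr_Dop] wf_opr_Mul])

lemma wf_M_op:
  assumes "Jt \<in> carrier_mat N N" and "\<And>i. i < n \<Longrightarrow> v i \<in> carrier_mat N N"
    and "q \<in> carrier_mat N m" and "r \<in> carrier_mat N m" and "M0 \<in> carrier_mat m m"
  shows "wf_opr (M_op emb n \<alpha> Jt v q M0 r) N N"
  unfolding M_op_def
  using assms
  by (intro wf_opr_Add wf_opr_Scal wf_opr_Top wf_opr_osum wf_opr_Mul_Dop_pow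
      wf_opr_Mul_Iop_Mul[where s = m]) auto

lemma wf_L_op:
  assumes M: "wf_opr M N N" and "Jk \<in> carrier_mat N N" and "\<And>j. j < k \<Longrightarrow> u j \<in> carrier_mat N N"
    and q: "q \<in> carrier_mat N m" and r: "r \<in> carrier_mat N m" and "M0 \<in> carrier_mat m m"
  shows "wf_opr (L_op Dx Dt J emb M k l c Jk u q M0 r) N N"
proof -
  have "act Dx Dt J (opow M j) q \<in> carrier_mat N m"
    and "act Dx Dt J (opow (tau M) j) r \<in> carrier_mat N m" for j
    by (rule act_carrier_mat[OF wf_opr_opow], use M wf_opr_tau q r in auto)+
  then show ?thesis
    unfolding L_op_def
    using assms
    by (intro wf_opr_Add wf_opr_Scal wf_opr_osum wf_opr_Mul_Dop_pow
        wf_opr_Mul_Iop_Mul[where s = m]) (auto intro!: mult_carrier_mat)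
qed

lemma wf_W_op: "\<phi> \<in> carrier_mat N K \<Longrightarrow> \<psi> \<in> carrier_mat N K \<Longrightarrow> \<Delta>i \<in> carrier_mat K K
    \<Longrightarrow> wf_opr (W_op \<phi> \<psi> \<Delta>i) N N"
  unfolding W_op_def by (intro wf_opr_Add wf_opr_Id wf_opr_Scal wf_opr_Mul_Iop_Mul[where s = K]) auto

lemma wf_Winv_op: "\<phi> \<in> carrier_mat N K \<Longrightarrow> \<psi> \<in> carrier_mat N K \<Longrightarrow> \<Delta>i \<in> carrier_mat K K
    \<Longrightarrow> wf_opr (Winv_op \<phi> \<psi> \<Delta>i) N N"
  unfolding Winv_op_def by (intro wf_opr_Add wf_opr_Id wf_opr_Mul_Iop_Mul[where s = K]) auto

lemma wf_dress: "\<phi> \<in> carrier_mat N K \<Longrightarrow> \<psi> \<in> carrier_mat N K \<Longrightarrow> \<Delta>i \<in> carrier_mat K K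
    \<Longrightarrow> wf_opr P N N \<Longrightarrow> wf_opr (dress \<phi> \<psi> \<Delta>i P) N N"
  unfolding dress_def by (rule wf_opr_Comp[OF wf_opr_Comp[OF wf_Winv_op] wf_W_op])

locale diff_algebra =
  fixes Dx Dt J :: "'a::comm_ring_1 \<Rightarrow> 'a" and emb :: "complex \<Rightarrow> 'a"
  assumes diff_setting: "diff_setting Dx Dt J emb"
begin

lemma Dx_add: "Dx (f + g) = Dx f + Dx g" and Dx_mult: "Dx (f * g) = Dx f * g + f * Dx g"
  and Dt_add: "Dt (f + g) = Dt f + Dt g" and Dt_mult: "Dt (f * g) = Dt f * g + f * Dt g"
  and Dx_J: "Dx (J f) = f" and J_add: "J (f + g) = J f + J g"
  and J_Dx_mult: "(f - J (Dx f)) * (g - J (Dx g)) = f * g - J (Dx (f * g))"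
  and emb_add: "emb (a + b) = emb a + emb b" and emb_mult: "emb (a * b) = emb a * emb b"
  and emb_one: "emb 1 = 1" and Dx_emb: "Dx (emb a) = 0" and Dt_emb: "Dt (emb a) = 0"
  using diff_setting unfolding diff_setting_def by auto

sublocale Dx: ab_group_add_hom Dx by (rule additive_ab_group_add_hom[OF Dx_add])
sublocale Dt: ab_group_add_hom Dt by (rule additive_ab_group_add_hom[OF Dt_add])
sublocale J: ab_group_add_hom J by (rule additive_ab_group_add_hom[OF J_add])

lemma emb_zero [simp]: "emb 0 = 0"
  using emb_add[of 0 0] by simp

lemma emb_uminus: "emb (- a) = - emb a"
  using emb_add[of "- a" a] by (simp add: eq_neg_iff_add_eq_0)

lemma emb_semiring_hom: "semiring_hom emb"
  by unfold_locales (simp_all add: emb_add emb_mult emb_one)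

lemma Dx_one: "Dx 1 = 0"
  using Dx_mult[of 1 1] by simp

text \<open>The boundary term \<open>E\<close> of \<open>diff_setting\<close>: evaluation at the base point of \<open>J\<close>.\<close>

definition base_value :: "'a \<Rightarrow> 'a" where
  "base_value f = f - J (Dx f)"

lemma base_value_add: "base_value (f + g) = base_value f + base_value g"
  and base_value_diff: "base_value (f - g) = base_value f - base_value g"
  and base_value_mult: "base_value (f * g) = base_value f * base_value g"
  by (simp_all add: base_value_def Dx_add J_add Dx.hom_minus J.hom_minus J_Dx_mult)

lemma base_value_semiring_hom: "semiring_hom base_value"
  by unfold_locales
    (simp_all add: base_value_add base_value_mult base_value_def[of 0] base_value_def[of 1] Dx_one)

lemma base_value_J [simp]: "base_value (J f) = 0"
  by (simp add: base_value_def Dx_J)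

lemma base_value_emb [simp]: "base_value (emb a) = emb a"
  by (simp add: base_value_def Dx_emb)

lemma map_mat_J_Dx: "map_mat J (map_mat Dx A) = A - map_mat base_value A"
  by (intro eq_matI) (auto simp: base_value_def)

lemma J_mult_const:
  assumes "Dx h = 0"
  shows "J (h * f) = h * J f"
proof -
  \<comment> \<open>the difference has zero derivative and zero boundary value\<close>
  define g where "g = J (h * f) - h * J f"
  have "Dx g = 0" by (simp add: g_def Dx.hom_minus Dx_J Dx_mult assms)
  moreover have "base_value g = 0"
    by (simp add: g_def base_value_diff base_value_mult)
  ultimately show ?thesis by (simp add: base_value_def g_def)
qed

lemma cmat_mult:
  "A \<in> carrier_mat n k \<Longrightarrow> B \<in> carrier_mat k m \<Longrightarrow> cmat emb (A * B) = cmat emb A * cmat emb B"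
  unfolding cmat_def by (rule semiring_hom.mat_hom_mult[OF emb_semiring_hom])

lemma cmat_one: "cmat emb (1\<^sub>m n) = 1\<^sub>m n"
  unfolding cmat_def by (rule semiring_hom.mat_hom_one[OF emb_semiring_hom])

lemma mult_cmat_neg_smult:
  "F \<in> carrier_mat n k \<Longrightarrow> A \<in> carrier_mat k m
    \<Longrightarrow> F * cmat emb (- (c \<cdot>\<^sub>m A)) = - (emb c \<cdot>\<^sub>m (F * cmat emb A))"
  unfolding cmat_def by (rule eq_matI) (auto simp: scalar_prod_def emb_uminus emb_mult
    sum_distrib_left ac_simps simp flip: sum_negf)

lemma J_mult_emb: "J (a * emb x) = J a * emb x"
  using J_mult_const[OF Dx_emb, of x a] by (simp add: mult.commute)

lemma map_mat_mult_cmat: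
  assumes h: "ab_group_add_hom h" and h_emb: "\<And>a x. h (a * emb x) = h a * emb x"
    and f: "f \<in> carrier_mat r c" and Y: "Y \<in> carrier_mat c d"
  shows "map_mat h (f * cmat emb Y) = map_mat h f * cmat emb Y"
proof -
  interpret h: ab_group_add_hom h by (rule h)
  show ?thesis
    using f Y by (intro eq_matI) (auto simp: cmat_def scalar_prod_def h.hom_sum h_emb)
qed

lemma act_mult_cmat:
  "wf_opr P r s \<Longrightarrow> f \<in> carrier_mat r c \<Longrightarrow> Y \<in> carrier_mat c d
    \<Longrightarrow> act Dx Dt J P (f * cmat emb Y) = act Dx Dt J P f * cmat emb Y"
proof (induction P r s arbitrary: f rule: wf_opr.induct)
  case (wf_opr_Mul A s r)
  then show ?case by (simp add: assoc_mult_mat[of A s r f c])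
next
  case wf_opr_Dop
  then show ?case
    by (auto intro!: map_mat_mult_cmat Dx.ab_group_add_hom_axioms simp: Dx_mult Dx_emb)
next
  case wf_opr_Iop
  then show ?case by (auto intro!: map_mat_mult_cmat J.ab_group_add_hom_axioms J_mult_emb)
next
  case wf_opr_Top
  then show ?case
    by (auto intro!: map_mat_mult_cmat Dt.ab_group_add_hom_axioms simp: Dt_mult Dt_emb)
next
  case (wf_opr_Scal P r s a)
  then show ?case
    using act_carrier_mat[OF wf_opr_Scal(1)] by (auto simp: mult_smult_assoc_mat[of _ s c])
next
  case (wf_opr_Add P r s Q)
  then show ?case
    using act_carrier_mat[OF wf_opr_Add(1)] act_carrier_mat[OF wf_opr_Add(2)]
    by (auto simp: add_mult_distrib_mat[of _ s c])
next
  case (wf_opr_Comp Q r s P t)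
  then show ?case using act_carrier_mat[OF wf_opr_Comp(1)] by auto
qed auto

lemma act_opow_eigen:
  assumes P: "wf_opr P n n" and F: "F \<in> carrier_mat n K" and Z: "Z \<in> carrier_mat K K"
    and eigen: "act Dx Dt J P F = F * cmat emb Z"
  shows "act Dx Dt J (opow P j) F = F * cmat emb (Z ^\<^sub>m j)"
proof (induction j)
  case 0
  show ?case using F Z by (simp add: cmat_one)
next
  case (Suc j)
  have "act Dx Dt J (opow P (Suc j)) F = act Dx Dt J P F * cmat emb (Z ^\<^sub>m j)"
    using Suc act_mult_cmat[OF P F, of "Z ^\<^sub>m j" K] Z by simp
  also have "\<dots> = F * cmat emb (Z * Z ^\<^sub>m j)"
    using F Z by (simp add: eigen cmat_mult[of Z K K "Z ^\<^sub>m j" K] assoc_mult_mat[of F n K _ K _ K])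
  finally show ?case unfolding pow_mat_Suc_left[OF Z] .
qed

lemma act_conj_eigen:
  assumes A: "wf_opr A n n" and P: "wf_opr P n n"
    and f: "f \<in> carrier_mat n K" and g: "g \<in> carrier_mat n K"
    and C: "C \<in> carrier_mat K K" and Ci: "Ci \<in> carrier_mat K K" and Y: "Y \<in> carrier_mat K K"
    and B_g: "act Dx Dt J B g = f * cmat emb Ci"
    and P_f: "act Dx Dt J P f = f * cmat emb Y"
    and A_f: "act Dx Dt J A f = g * cmat emb C"
  shows "act Dx Dt J A (act Dx Dt J P (act Dx Dt J B g)) = g * cmat emb (C * Y * Ci)"
proof -
  have "act Dx Dt J A (act Dx Dt J P (act Dx Dt J B g)) = act Dx Dt J A (act Dx Dt J P f * cmat emb Ci)"
    using act_mult_cmat[OF P f Ci] by (simp add: B_g)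
  also have "\<dots> = act Dx Dt J A (f * cmat emb (Y * Ci))"
    using f Y Ci by (simp add: P_f cmat_mult[of Y K K] assoc_mult_mat[of f n K _ K _ K])
  also have "\<dots> = g * cmat emb (C * (Y * Ci))"
    using act_mult_cmat[OF A f, of "Y * Ci" K] g C mult_carrier_mat[OF Y Ci]
    by (simp add: A_f cmat_mult[of C K K "Y * Ci" K] assoc_mult_mat[of g n K _ K _ K])
  finally show ?thesis using C Y Ci by (simp add: assoc_mult_mat[of C K K Y K Ci K])
qed

lemma map_mat_Dx_mult:
  "A \<in> carrier_mat n k \<Longrightarrow> B \<in> carrier_mat k m
    \<Longrightarrow> map_mat Dx (A * B) = map_mat Dx A * B + A * map_mat Dx B"
  by (intro eq_matI) (auto simp: scalar_prod_def Dx.hom_sum Dx_mult sum.distrib)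

lemma map_mat_Dx_inverse:
  assumes A: "A \<in> carrier_mat n n" and Ai: "Ai \<in> carrier_mat n n"
    and inv: "A * Ai = 1\<^sub>m n" "Ai * A = 1\<^sub>m n"
  shows "map_mat Dx Ai = - (Ai * map_mat Dx A * Ai)"
proof (rule add_eq_zero_imp_eq_uminus_mat)
  have DA: "map_mat Dx A \<in> carrier_mat n n" and DAi: "map_mat Dx Ai \<in> carrier_mat n n"
    using A Ai by auto
  have "Ai * map_mat Dx A * Ai + map_mat Dx Ai = Ai * (map_mat Dx A * Ai) + Ai * A * map_mat Dx Ai"
    using A Ai DA DAi inv(2) by simp
  also have "\<dots> = Ai * (map_mat Dx A * Ai + A * map_mat Dx Ai)"
    using A Ai DA DAi by (simp add: mult_add_distrib_mat[of Ai n n _ n])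
  also have "\<dots> = Ai * map_mat Dx (1\<^sub>m n)"
    using map_mat_Dx_mult[OF A Ai] inv(1) by simp
  also have "map_mat Dx (1\<^sub>m n) = 0\<^sub>m n n"
    by (intro eq_matI) (auto simp: Dx_one)
  finally show "Ai * map_mat Dx A * Ai + map_mat Dx Ai = 0\<^sub>m n n"
    using Ai by simp
qed (use A Ai in auto)

lemma conj_spectral_relation:
  assumes M': "wf_opr M' n n" and F: "F \<in> carrier_mat n K"
    and \<Lambda>: "\<Lambda> \<in> carrier_mat K K" and C: "C \<in> carrier_mat K K" and Ci: "Ci \<in> carrier_mat K K"
    and C_inv: "C * Ci = 1\<^sub>m K" "Ci * C = 1\<^sub>m K"
    and M'_F: "act Dx Dt J M' F = F * cmat emb (C * \<Lambda> * Ci)"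
    and L'_F: "act Dx Dt J L' F = F * cmat emb (C * - (c \<cdot>\<^sub>m \<Lambda> ^\<^sub>m Suc l) * Ci)"
  shows "act Dx Dt J L' F + act Dx Dt J (Scal (emb c) (opow M' (Suc l))) F = 0\<^sub>m n K"
proof -
  define S where "S = C * \<Lambda> ^\<^sub>m Suc l * Ci"
  have S: "S \<in> carrier_mat K K"
    unfolding S_def using C \<Lambda> Ci by (meson mult_carrier_mat pow_carrier_mat)
  have "(C * \<Lambda> * Ci) ^\<^sub>m Suc l = S"
    unfolding S_def using C \<Lambda> Ci C_inv
    by (intro similar_mat_wit_pow_id) (auto simp: similar_mat_wit_def Let_def)
  moreover have "act Dx Dt J (opow M' (Suc l)) F = F * cmat emb ((C * \<Lambda> * Ci) ^\<^sub>m Suc l)"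
    by (rule act_opow_eigen[OF M' F _ M'_F]) (use C \<Lambda> Ci in simp)
  ultimately have M'_pow: "act Dx Dt J (opow M' (Suc l)) F = F * cmat emb S"
    by simp
  have "C * - (c \<cdot>\<^sub>m \<Lambda> ^\<^sub>m Suc l) * Ci = - (c \<cdot>\<^sub>m S)"
    unfolding S_def using C \<Lambda> Ci by (intro mult_neg_smult_mult_mat) auto
  then have L'_S: "act Dx Dt J L' F = - (emb c \<cdot>\<^sub>m (F * cmat emb S))"
    using L'_F mult_cmat_neg_smult[OF F S] by simp
  show ?thesis
    unfolding act.simps(7) M'_pow L'_S using F S by simp
qed

end

locale dressing_data = diff_algebra Dx Dt J emb
  for Dx Dt J :: "'a::comm_ring_1 \<Rightarrow> 'a" and emb +
  fixes \<phi> \<psi> \<Delta> \<Delta>i :: "'a mat" and C Ci :: "complex mat" and N K :: nat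
  assumes \<phi>: "\<phi> \<in> carrier_mat N K" and \<psi>: "\<psi> \<in> carrier_mat N K"
    and C: "C \<in> carrier_mat K K" and Ci: "Ci \<in> carrier_mat K K"
    and C_inv: "C * Ci = 1\<^sub>m K" "Ci * C = 1\<^sub>m K"
    and Delta_def: "\<Delta> = cmat emb C + map_mat J (transpose_mat \<psi> * \<phi>)"
    and \<Delta>i: "\<Delta>i \<in> carrier_mat K K" and Delta_inv: "\<Delta> * \<Delta>i = 1\<^sub>m K" "\<Delta>i * \<Delta> = 1\<^sub>m K"
begin

lemma Delta_carrier: "\<Delta> \<in> carrier_mat K K"
  using C \<phi> \<psi> by (simp add: Delta_def)

lemma dim_simps [simp]:
  "dim_row \<phi> = N" "dim_col \<phi> = K" "dim_row \<psi> = N" "dim_col \<psi> = K"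
  "dim_row \<Delta> = K" "dim_col \<Delta> = K" "dim_row \<Delta>i = K" "dim_col \<Delta>i = K"
  "dim_row C = K" "dim_col C = K" "dim_row Ci = K" "dim_col Ci = K"
  using \<phi> \<psi> Delta_carrier \<Delta>i C Ci by auto

lemma Dx_Delta: "map_mat Dx \<Delta> = transpose_mat \<psi> * \<phi>"
  by (intro eq_matI) (auto simp: Delta_def cmat_def Dx_add Dx_J Dx_emb)

lemma base_value_Delta_inv: "map_mat base_value \<Delta>i = cmat emb Ci"
proof (rule right_inverse_eq_left_inverse_mat)
  have "map_mat base_value \<Delta> = cmat emb C"
    by (intro eq_matI) (auto simp: Delta_def cmat_def base_value_add)
  then show "cmat emb C * map_mat base_value \<Delta>i = 1\<^sub>m K"
    using semiring_hom.mat_hom_mult[OF base_value_semiring_hom Delta_carrier \<Delta>i] Delta_inv(1)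
      semiring_hom.mat_hom_one[OF base_value_semiring_hom]
    by simp
  show "cmat emb Ci * cmat emb C = 1\<^sub>m K"
    using C Ci C_inv by (simp flip: cmat_mult add: cmat_one)
qed (use C Ci \<Delta>i in auto)

lemma J_Delta_inv_sandwich:
  "map_mat J (\<Delta>i * transpose_mat \<psi> * \<phi> * \<Delta>i) = cmat emb Ci - \<Delta>i"
proof -
  have "\<Delta>i * transpose_mat \<psi> * \<phi> = \<Delta>i * map_mat Dx \<Delta>"
    unfolding Dx_Delta by (rule assoc_mult_mat_dim) simp_all
  then have "\<Delta>i * transpose_mat \<psi> * \<phi> * \<Delta>i = - map_mat Dx \<Delta>i"
    by (simp add: map_mat_Dx_inverse[OF Delta_carrier \<Delta>i Delta_inv])
  also have "map_mat J \<dots> = - map_mat J (map_mat Dx \<Delta>i)"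
    by (intro eq_matI) (auto simp: J.hom_uminus)
  finally show ?thesis
    using \<Delta>i Ci by (simp add: map_mat_J_Dx base_value_Delta_inv) (intro eq_matI; auto)
qed

lemma W_op_phi: "act Dx Dt J (W_op \<phi> \<psi> \<Delta>i) \<phi> = \<phi> * \<Delta>i * cmat emb C"
proof -
  let ?X = "map_mat J (transpose_mat \<psi> * \<phi>)"
  have carr: "\<phi> * \<Delta>i \<in> carrier_mat N K" "cmat emb C \<in> carrier_mat K K" "?X \<in> carrier_mat K K"
    using \<phi> \<psi> \<Delta>i C by auto
  have "\<phi> = \<phi> * \<Delta>i * \<Delta>"
    using Delta_inv(2) by (simp add: assoc_mult_mat_dim)
  also have "\<dots> = \<phi> * \<Delta>i * cmat emb C + \<phi> * \<Delta>i * ?X"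
    unfolding Delta_def using carr by (rule mult_add_distrib_mat)
  finally have decomp: "\<phi> * \<Delta>i * cmat emb C + \<phi> * \<Delta>i * ?X = \<phi>" ..
  have "act Dx Dt J (W_op \<phi> \<psi> \<Delta>i) \<phi> = \<phi> + (-1) \<cdot>\<^sub>m (\<phi> * \<Delta>i * ?X)"
    by (simp add: W_op_def)
  also have "\<dots> = (\<phi> * \<Delta>i * cmat emb C + \<phi> * \<Delta>i * ?X) + (-1) \<cdot>\<^sub>m (\<phi> * \<Delta>i * ?X)"
    by (simp only: decomp)
  also have "\<dots> = \<phi> * \<Delta>i * cmat emb C"
    using carr by (intro add_smult_neg_one_cancel_mat[of _ N K]) auto
  finally show ?thesis .
qed

lemma Winv_op_Phi: "act Dx Dt J (Winv_op \<phi> \<psi> \<Delta>i) (\<phi> * \<Delta>i) = \<phi> * cmat emb Ci"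
proof -
  have "\<Delta>i * transpose_mat \<psi> * (\<phi> * \<Delta>i) = \<Delta>i * transpose_mat \<psi> * \<phi> * \<Delta>i"
    by (simp add: assoc_mult_mat_dim)
  then have "act Dx Dt J (Winv_op \<phi> \<psi> \<Delta>i) (\<phi> * \<Delta>i) = \<phi> * \<Delta>i + \<phi> * (cmat emb Ci - \<Delta>i)"
    by (simp add: Winv_op_def J_Delta_inv_sandwich)
  also have "\<dots> = \<phi> * \<Delta>i + (\<phi> * cmat emb Ci - \<phi> * \<Delta>i)"
    using \<phi> Ci \<Delta>i by (simp add: mult_minus_distrib_mat[of \<phi> N K])
  also have "\<dots> = \<phi> * cmat emb Ci"
    using \<phi> Ci \<Delta>i by (intro add_diff_cancel_left_mat[of _ N K]) auto
  finally show ?thesis .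
qed

lemma tau_W_op_Psi:
  "act Dx Dt J (tau (W_op \<phi> \<psi> \<Delta>i)) (\<psi> * transpose_mat \<Delta>i) = \<psi> * cmat emb (transpose_mat Ci)"
proof -
  define Y where "Y = transpose_mat (cmat emb Ci) - transpose_mat \<Delta>i"
  have Y: "Y \<in> carrier_mat K K"
    using Ci \<Delta>i by (simp add: Y_def minus_carrier_mat)
  have "transpose_mat (\<phi> * \<Delta>i) * (\<psi> * transpose_mat \<Delta>i)
      = transpose_mat (\<Delta>i * transpose_mat \<psi> * \<phi> * \<Delta>i)"
    by (simp add: transpose_mult_dim assoc_mult_mat_dim)
  then have "map_mat J (transpose_mat (\<phi> * \<Delta>i) * (\<psi> * transpose_mat \<Delta>i)) = Y"
    using Ci \<Delta>i
    by (simp flip: map_mat_transpose add: J_Delta_inv_sandwich transpose_minus[of _ K K] Y_def)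
  then have "act Dx Dt J (tau (W_op \<phi> \<psi> \<Delta>i)) (\<psi> * transpose_mat \<Delta>i)
      = \<psi> * transpose_mat \<Delta>i + (-1) \<cdot>\<^sub>m (\<psi> * ((-1) \<cdot>\<^sub>m Y))"
    by (simp add: W_op_def)
  also have "\<dots> = \<psi> * transpose_mat \<Delta>i + \<psi> * Y"
    by (simp add: mult_smult_distrib[OF \<psi> Y] smult_neg_one_neg_one_mat)
  also have "\<dots> = \<psi> * transpose_mat (cmat emb Ci)"
    using \<psi> Ci \<Delta>i
    by (simp add: Y_def mult_minus_distrib_mat[of \<psi> N K] add_diff_cancel_left_mat[of _ N K])
  finally show ?thesis by (simp add: transpose_cmat)
qed

lemma tau_Winv_op_psi:
  "act Dx Dt J (tau (Winv_op \<phi> \<psi> \<Delta>i)) \<psi> = \<psi> * transpose_mat \<Delta>i * cmat emb (transpose_mat C)"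
proof -
  let ?Xt = "transpose_mat (map_mat J (transpose_mat \<psi> * \<phi>))"
  have carr: "\<psi> * transpose_mat \<Delta>i \<in> carrier_mat N K" "transpose_mat (cmat emb C) \<in> carrier_mat K K"
    "?Xt \<in> carrier_mat K K"
    using \<phi> \<psi> \<Delta>i C by auto
  have "transpose_mat \<Delta>i * transpose_mat \<Delta> = 1\<^sub>m K"
    using arg_cong[OF Delta_inv(1), of transpose_mat] by (simp add: transpose_mult_dim)
  then have "\<psi> = \<psi> * transpose_mat \<Delta>i * transpose_mat \<Delta>"
    by (simp add: assoc_mult_mat_dim)
  also have "\<dots> = \<psi> * transpose_mat \<Delta>i * transpose_mat (cmat emb C) + \<psi> * transpose_mat \<Delta>i * ?Xt"
    unfolding Delta_def using carr C \<phi> \<psi>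
    by (simp add: transpose_add[of _ K K] mult_add_distrib_mat[of _ N K])
  finally have decomp:
    "\<psi> * transpose_mat \<Delta>i * transpose_mat (cmat emb C) + \<psi> * transpose_mat \<Delta>i * ?Xt = \<psi>" ..
  have "act Dx Dt J (tau (Winv_op \<phi> \<psi> \<Delta>i)) \<psi> = \<psi> + \<psi> * transpose_mat \<Delta>i * ((-1) \<cdot>\<^sub>m ?Xt)"
    by (simp add: Winv_op_def transpose_mult_dim map_mat_transpose)
  also have "\<dots> = \<psi> + (-1) \<cdot>\<^sub>m (\<psi> * transpose_mat \<Delta>i * ?Xt)"
    by (simp only: mult_smult_distrib[OF carr(1) carr(3)])
  also have "\<dots> = (\<psi> * transpose_mat \<Delta>i * transpose_mat (cmat emb C) + \<psi> * transpose_mat \<Delta>i * ?Xt)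
      + (-1) \<cdot>\<^sub>m (\<psi> * transpose_mat \<Delta>i * ?Xt)"
    by (simp only: decomp)
  also have "\<dots> = \<psi> * transpose_mat \<Delta>i * transpose_mat (cmat emb C)"
    using carr by (intro add_smult_neg_one_cancel_mat[of _ N K]) auto
  finally show ?thesis by (simp add: transpose_cmat)
qed

lemma dress_eigen:
  assumes "wf_opr P N N" and "Y \<in> carrier_mat K K" and "act Dx Dt J P \<phi> = \<phi> * cmat emb Y"
  shows "act Dx Dt J (dress \<phi> \<psi> \<Delta>i P) (\<phi> * \<Delta>i) = \<phi> * \<Delta>i * cmat emb (C * Y * Ci)"
  unfolding dress_def act.simps(9)
  by (rule act_conj_eigen[OF wf_W_op[OF \<phi> \<psi> \<Delta>i] assms(1) \<phi> _ C Ci assms(2)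
        Winv_op_Phi assms(3) W_op_phi]) (use \<phi> \<Delta>i in simp)

lemma tau_dress_eigen:
  assumes "wf_opr P N N" and "Y \<in> carrier_mat K K" and "act Dx Dt J (tau P) \<psi> = \<psi> * cmat emb Y"
  shows "act Dx Dt J (tau (dress \<phi> \<psi> \<Delta>i P)) (\<psi> * transpose_mat \<Delta>i)
    = \<psi> * transpose_mat \<Delta>i * cmat emb (transpose_mat C * Y * transpose_mat Ci)"
  unfolding dress_def tau.simps act.simps(9)
  by (rule act_conj_eigen[OF wf_opr_tau[OF wf_Winv_op[OF \<phi> \<psi> \<Delta>i]] wf_opr_tau[OF assms(1)] \<psi> _
        _ _ assms(2) tau_W_op_Psi assms(3) tau_Winv_op_psi]) (use \<psi> \<Delta>i C Ci in simp_all)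

lemma dressed_eigen_equations:
  assumes wf_M: "wf_opr M N N" and wf_L: "wf_opr L N N"
    and \<Lambda>: "\<Lambda> \<in> carrier_mat K K" and \<Lambda>t: "\<Lambda>t \<in> carrier_mat K K"
    and M_phi: "act Dx Dt J M \<phi> = \<phi> * cmat emb \<Lambda>"
    and Mt_psi: "act Dx Dt J (tau M) \<psi> = \<psi> * cmat emb \<Lambda>t"
    and L_phi: "act Dx Dt J L \<phi> = - (emb c \<cdot>\<^sub>m (\<phi> * cmat emb (\<Lambda> ^\<^sub>m Suc l)))"
    and Lt_psi: "act Dx Dt J (tau L) \<psi> = - (emb c \<cdot>\<^sub>m (\<psi> * cmat emb (\<Lambda>t ^\<^sub>m Suc l)))"
  shows "\<phi> * \<Delta>i = act Dx Dt J (W_op \<phi> \<psi> \<Delta>i) \<phi> * cmat emb Ci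
    \<and> \<psi> * transpose_mat \<Delta>i = act Dx Dt J (tau (Winv_op \<phi> \<psi> \<Delta>i)) \<psi> * cmat emb (transpose_mat Ci)
    \<and> act Dx Dt J (dress \<phi> \<psi> \<Delta>i L) (\<phi> * \<Delta>i)
        + act Dx Dt J (Scal (emb c) (opow (dress \<phi> \<psi> \<Delta>i M) (Suc l))) (\<phi> * \<Delta>i) = 0\<^sub>m N K
    \<and> act Dx Dt J (tau (dress \<phi> \<psi> \<Delta>i L)) (\<psi> * transpose_mat \<Delta>i)
        + act Dx Dt J (Scal (emb c) (opow (tau (dress \<phi> \<psi> \<Delta>i M)) (Suc l))) (\<psi> * transpose_mat \<Delta>i)
      = 0\<^sub>m N K"
proof (intro conjI)
  have neg_smult_pow_carrier: "- (c \<cdot>\<^sub>m X ^\<^sub>m Suc l) \<in> carrier_mat K K" if "X \<in> carrier_mat K K" for X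
    by (rule uminus_carrier_mat[OF smult_carrier_mat[OF pow_carrier_mat[OF that]]])
  have Ct_inv: "transpose_mat C * transpose_mat Ci = 1\<^sub>m K" "transpose_mat Ci * transpose_mat C = 1\<^sub>m K"
    using arg_cong[OF C_inv(2), of transpose_mat] arg_cong[OF C_inv(1), of transpose_mat]
    by (simp_all add: transpose_mult_dim)
  have "cmat emb C * cmat emb Ci = 1\<^sub>m K"
    using C Ci C_inv by (simp flip: cmat_mult add: cmat_one)
  then show "\<phi> * \<Delta>i = act Dx Dt J (W_op \<phi> \<psi> \<Delta>i) \<phi> * cmat emb Ci"
    by (simp add: W_op_phi assoc_mult_mat_dim)
  have "cmat emb (transpose_mat C) * cmat emb (transpose_mat Ci) = 1\<^sub>m K"
    using C Ci Ct_inv by (simp flip: cmat_mult add: cmat_one)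
  then show "\<psi> * transpose_mat \<Delta>i = act Dx Dt J (tau (Winv_op \<phi> \<psi> \<Delta>i)) \<psi> * cmat emb (transpose_mat Ci)"
    by (simp add: tau_Winv_op_psi assoc_mult_mat_dim)
  have L_phi': "act Dx Dt J L \<phi> = \<phi> * cmat emb (- (c \<cdot>\<^sub>m \<Lambda> ^\<^sub>m Suc l))"
    unfolding mult_cmat_neg_smult[OF \<phi> pow_carrier_mat[OF \<Lambda>]] by (rule L_phi)
  show "act Dx Dt J (dress \<phi> \<psi> \<Delta>i L) (\<phi> * \<Delta>i)
      + act Dx Dt J (Scal (emb c) (opow (dress \<phi> \<psi> \<Delta>i M) (Suc l))) (\<phi> * \<Delta>i) = 0\<^sub>m N K"
    by (rule conj_spectral_relation[OF wf_dress[OF \<phi> \<psi> \<Delta>i wf_M] mult_carrier_mat[OF \<phi> \<Delta>i] \<Lambda> C Ci C_inv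
          dress_eigen[OF wf_M \<Lambda> M_phi] dress_eigen[OF wf_L neg_smult_pow_carrier[OF \<Lambda>] L_phi']])
  have Lt_psi': "act Dx Dt J (tau L) \<psi> = \<psi> * cmat emb (- (c \<cdot>\<^sub>m \<Lambda>t ^\<^sub>m Suc l))"
    unfolding mult_cmat_neg_smult[OF \<psi> pow_carrier_mat[OF \<Lambda>t]] by (rule Lt_psi)
  show "act Dx Dt J (tau (dress \<phi> \<psi> \<Delta>i L)) (\<psi> * transpose_mat \<Delta>i)
      + act Dx Dt J (Scal (emb c) (opow (tau (dress \<phi> \<psi> \<Delta>i M)) (Suc l))) (\<psi> * transpose_mat \<Delta>i)
      = 0\<^sub>m N K"
    by (rule conj_spectral_relation[OF wf_opr_tau[OF wf_dress[OF \<phi> \<psi> \<Delta>i wf_M]] _ \<Lambda>t _ _ Ct_inv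
          tau_dress_eigen[OF wf_M \<Lambda>t Mt_psi] tau_dress_eigen[OF wf_L neg_smult_pow_carrier[OF \<Lambda>t] Lt_psi']])
      (use \<psi> \<Delta>i C Ci in simp_all)
qed

end

theorem corollary4:
  fixes Dx Dt J :: "'a::comm_ring_1 \<Rightarrow> 'a" and emb :: "complex \<Rightarrow> 'a"
    and k n l N m K :: nat and c \<alpha> :: complex
    and Jk Jt M0 \<Lambda> \<Lambda>t C Ci :: "complex mat"
    and u v :: "nat \<Rightarrow> 'a mat" and q r \<phi> \<psi> \<Delta>i :: "'a mat"
  defines "M \<equiv> M_op emb n \<alpha> Jt v q M0 r"
  defines "L \<equiv> L_op Dx Dt J emb M k l c Jk u q M0 r"
  defines "\<Delta> \<equiv> cmat emb C + map_mat J (transpose_mat \<psi> * \<phi>)"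
  defines "W \<equiv> W_op \<phi> \<psi> \<Delta>i" and "Winv \<equiv> Winv_op \<phi> \<psi> \<Delta>i"
  defines "\<Phi> \<equiv> \<phi> * \<Delta>i" and "\<Psi> \<equiv> \<psi> * transpose_mat \<Delta>i"
  assumes setting: "diff_setting Dx Dt J emb"
    and Jk: "Jk \<in> carrier_mat N N" and Jt: "Jt \<in> carrier_mat N N" and comm: "Jk * Jt = Jt * Jk"
    and u: "\<And>j. j < k \<Longrightarrow> u j \<in> carrier_mat N N"
    and v: "\<And>i. i < n \<Longrightarrow> v i \<in> carrier_mat N N"
    and q: "q \<in> carrier_mat N m" and r: "r \<in> carrier_mat N m" and M0: "M0 \<in> carrier_mat m m"
    and \<phi>: "\<phi> \<in> carrier_mat N K" and \<psi>: "\<psi> \<in> carrier_mat N K"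
    and \<Lambda>: "\<Lambda> \<in> carrier_mat K K" and \<Lambda>t: "\<Lambda>t \<in> carrier_mat K K"
    and C: "C \<in> carrier_mat K K" and Ci: "Ci \<in> carrier_mat K K"
    and C_inv: "C * Ci = 1\<^sub>m K" "Ci * C = 1\<^sub>m K"
    and \<Delta>i: "\<Delta>i \<in> carrier_mat K K" and \<Delta>_inv: "\<Delta> * \<Delta>i = 1\<^sub>m K" "\<Delta>i * \<Delta> = 1\<^sub>m K"
    and M_phi: "act Dx Dt J M \<phi> = \<phi> * cmat emb \<Lambda>"
    and Mt_psi: "act Dx Dt J (tau M) \<psi> = \<psi> * cmat emb \<Lambda>t"
    and L_phi: "act Dx Dt J L \<phi> = - (emb c \<cdot>\<^sub>m (\<phi> * cmat emb (\<Lambda> ^\<^sub>m Suc l)))"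
    and Lt_psi: "act Dx Dt J (tau L) \<psi> = - (emb c \<cdot>\<^sub>m (\<psi> * cmat emb (\<Lambda>t ^\<^sub>m Suc l)))"
  shows "\<Phi> = act Dx Dt J W \<phi> * cmat emb Ci
    \<and> \<Psi> = act Dx Dt J (tau Winv) \<psi> * cmat emb (transpose_mat Ci)
    \<and> act Dx Dt J (dress \<phi> \<psi> \<Delta>i L) \<Phi>
           + act Dx Dt J (Scal (emb c) (opow (dress \<phi> \<psi> \<Delta>i M) (Suc l))) \<Phi> = 0\<^sub>m N K
    \<and> act Dx Dt J (tau (dress \<phi> \<psi> \<Delta>i L)) \<Psi>
           + act Dx Dt J (Scal (emb c) (opow (tau (dress \<phi> \<psi> \<Delta>i M)) (Suc l))) \<Psi> = 0\<^sub>m N K"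
proof -
  have data: "dressing_data Dx Dt J emb \<phi> \<psi> \<Delta> \<Delta>i C Ci N K"
    unfolding dressing_data_def dressing_data_axioms_def diff_algebra_def
    using setting \<phi> \<psi> C Ci C_inv \<Delta>i \<Delta>_inv by (simp add: \<Delta>_def)
  have wf_M: "wf_opr M N N"
    unfolding M_def by (rule wf_M_op[OF Jt v q r M0])
  have wf_L: "wf_opr L N N"
    unfolding L_def by (rule wf_L_op[OF wf_M Jk u q r M0])
  show ?thesis
    unfolding \<Phi>_def \<Psi>_def W_def Winv_def
    by (rule dressing_data.dressed_eigen_equations[OF data wf_M wf_L \<Lambda> \<Lambda>t M_phi Mt_psi L_phi Lt_psi])
qed

end
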